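(* Let $C\subset\mathbb{R}^2$ be a Jordan curve enclosing a convex region, and suppose there exist $c^1,c^2,c^3,c^4\in C$, $c^i=(c^i_1,c^i_2)$, such that $c^1_1=\min\{c_1:(c_1,c_2)\in C\}$, $c^2_2=\min\{c_2:(c_1,c_2)\in C\}$, $c^3_1=\max\{c_1:(c_1,c_2)\in C\}$, $c^4_2=\max\{c_2:(c_1,c_2)\in C\}$, and $$c^1_1<\min\{c^2_1,c^3_1,c^4_1\},\ c^2_2<\min\{c^1_2,c^3_2,c^4_2\},\ c^3_1>\max\{c^1_1,c^2_1,c^4_1\},\ c^4_2>\max\{c^1_2,c^2_2,c^3_2\}.$$ Then for every $x\in\mathbb{R}^2$ there exist $u=(u_1,u_2),v=(v_1,v_2),w=(w_1,w_2)\in C$ and $t\ne0$ such that $u-v=tx$, $w_1=u_1$ and $w_2=v_2$. *)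

theory Defs
  imports "HOL-Analysis.Analysis"
begin

definition jordan_curve :: "(real^2) set \<Rightarrow> bool" where
  "jordan_curve C \<longleftrightarrow> (\<exists>g. simple_path g \<and> pathfinish g = pathstart g \<and> path_image g = C)"

end

theory Submission
  imports Defs
begin

(* The closure K of the convex region enclosed by C is a compact convex set whose frontier lies
   in C. For a direction d in the closed first quadrant and a height y, let L y and R y be the
   ends of the horizontal chord of K at height y, and T s the top of the vertical chord of K at
   abscissa s. The points v = (L y, y), w = (R y, y) and u = (R y, T (R y)) lie on the frontier
   and span a right triangle with axis-parallel legs; it remains to choose y so that u - v is
   parallel to d. The chord ends are continuous in y (they are concave, resp. convex, and
   semicontinuous by compactness), so the cross product of d with u - v is continuous. It is
   <= 0 at the top of the right edge of K; if it is > 0 on the bottom chord, the intermediate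
   value theorem yields a zero, and otherwise v can be taken on the bottom chord itself.
   The remaining directions follow from the reflection in the vertical axis and from d -> -d. *)

definition vec2 :: "real \<Rightarrow> real \<Rightarrow> real^2" where
  "vec2 a b = (\<chi> i. if i = 1 then a else b)"

lemma vec2_nth [simp]: "vec2 a b $ 1 = a" "vec2 a b $ 2 = b"
  by (simp_all add: vec2_def)

lemma vec2_eta [simp]: "vec2 (p$1) (p$2) = p"
  by (simp add: vec2_def vec_eq_iff forall_2)

lemma vec2_eq_0_iff [simp]: "vec2 a b = 0 \<longleftrightarrow> a = 0 \<and> b = 0"
  by (simp add: vec_eq_iff forall_2)

lemma vec2_add: "vec2 a b + vec2 c d = vec2 (a + c) (b + d)"
  and vec2_diff: "vec2 a b - vec2 c d = vec2 (a - c) (b - d)"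
  and vec2_scaleR: "r *\<^sub>R vec2 a b = vec2 (r * a) (r * b)"
  by (simp_all add: vec_eq_iff forall_2)

lemma isCont_vec2_first: "isCont (\<lambda>x. vec2 x y) x"
proof -
  have "isCont (\<lambda>x. x *\<^sub>R vec2 1 0 + vec2 0 y) x"
    by (intro continuous_intros)
  then show ?thesis by (simp add: vec2_add vec2_scaleR)
qed

subsection \<open>Concave functions on a compact interval\<close>

lemma concave_on_Icc_lower_bound:
  fixes f :: "real \<Rightarrow> real"
  assumes f: "concave_on {\<alpha>..\<beta>} f" and y0: "y0 \<in> {\<alpha>..\<beta>}"
  obtains C where "\<And>y. y \<in> {\<alpha>..\<beta>} \<Longrightarrow> f y0 - C * \<bar>y - y0\<bar> \<le> f y"
proof -
  define sr where "sr = (f \<beta> - f y0) / (\<beta> - y0)"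
  define sl where "sl = (f \<alpha> - f y0) / (y0 - \<alpha>)"
  \<comment> \<open>at an endpoint \<open>y0\<close> the slope towards it is \<open>0\<close> (division by zero); that side is just \<open>{y0}\<close>\<close>
  have "f y0 - (\<bar>sr\<bar> + \<bar>sl\<bar>) * \<bar>y - y0\<bar> \<le> f y" if y: "y \<in> {\<alpha>..\<beta>}" for y
  proof (cases "y0 \<le> y")
    case True
    have "concave_on {y0..\<beta>} f"
      using f y0 unfolding concave_on_def by (auto intro: convex_on_subset)
    then have chord: "sr * (y - y0) + f y0 \<le> f y"
      unfolding sr_def using y True by (intro concave_onD_Icc') auto
    have lower: "- \<bar>sr\<bar> * (y - y0) \<le> sr * (y - y0)"
      using mult_right_mono[of "- \<bar>sr\<bar>" sr "y - y0"] True by simp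
    have nonneg: "0 \<le> \<bar>sl\<bar> * (y - y0)" using True by simp
    have dist: "\<bar>y - y0\<bar> = y - y0" using True by simp
    show ?thesis unfolding dist distrib_right using chord lower nonneg by linarith
  next
    case False
    have "concave_on {\<alpha>..y0} f"
      using f y0 unfolding concave_on_def by (auto intro: convex_on_subset)
    then have chord: "sl * (y0 - y) + f y0 \<le> f y"
      unfolding sl_def using y False by (intro concave_onD_Icc'') auto
    have lower: "- \<bar>sl\<bar> * (y0 - y) \<le> sl * (y0 - y)"
      using mult_right_mono[of "- \<bar>sl\<bar>" sl "y0 - y"] False by simp
    have nonneg: "0 \<le> \<bar>sr\<bar> * (y0 - y)" using False by simp
    have dist: "\<bar>y - y0\<bar> = y0 - y" using False by simp
    show ?thesis unfolding dist distrib_right using chord lower nonneg by linarith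
  qed
  then show ?thesis by (rule that)
qed

lemma concave_on_Icc_continuous_on:
  fixes f :: "real \<Rightarrow> real"
  assumes concave: "concave_on {\<alpha>..\<beta>} f"
    and superlevel_closed: "\<And>a. closed {y \<in> {\<alpha>..\<beta>}. a \<le> f y}"
  shows "continuous_on {\<alpha>..\<beta>} f"
  unfolding continuous_on_iff
proof (intro ballI allI impI)
  fix y0 e :: real assume y0: "y0 \<in> {\<alpha>..\<beta>}" and e: "0 < e"
  obtain C where C: "\<And>y. y \<in> {\<alpha>..\<beta>} \<Longrightarrow> f y0 - C * \<bar>y - y0\<bar> \<le> f y"
    using concave_on_Icc_lower_bound[OF concave y0] by blast
  have "open (- {y \<in> {\<alpha>..\<beta>}. f y0 + e \<le> f y})" "y0 \<notin> {y \<in> {\<alpha>..\<beta>}. f y0 + e \<le> f y}"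
    using superlevel_closed e by auto
  then obtain d where d: "0 < d" "ball y0 d \<subseteq> - {y \<in> {\<alpha>..\<beta>}. f y0 + e \<le> f y}"
    by (meson ComplI open_contains_ball)
  show "\<exists>d>0. \<forall>y\<in>{\<alpha>..\<beta>}. dist y y0 < d \<longrightarrow> dist (f y) (f y0) < e"
  proof (intro exI[of _ "min d (e / (\<bar>C\<bar> + 1))"] conjI ballI impI)
    show "0 < min d (e / (\<bar>C\<bar> + 1))" using d e by simp
    fix y assume y: "y \<in> {\<alpha>..\<beta>}" and near: "dist y y0 < min d (e / (\<bar>C\<bar> + 1))"
    have "y \<in> ball y0 d" using near by (simp add: dist_commute)
    then have "f y < f y0 + e" using d y by auto
    moreover have "C * \<bar>y - y0\<bar> < e"
    proof -
      have "C * \<bar>y - y0\<bar> \<le> (\<bar>C\<bar> + 1) * \<bar>y - y0\<bar>"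
        by (intro mult_right_mono) auto
      also have "\<dots> < e"
        using near by (simp add: dist_real_def field_simps)
      finally show ?thesis .
    qed
    then have "f y0 - e < f y" using C[OF y] by linarith
    ultimately show "dist (f y) (f y0) < e" by (simp add: dist_real_def abs_less_iff)
  qed
qed

subsection \<open>Chords of a compact convex set in the plane\<close>

definition row_max :: "(real^2) set \<Rightarrow> real \<Rightarrow> real" where
  "row_max S y = Sup {x. vec2 x y \<in> S}"

lemma bdd_above_row:
  assumes "bounded S"
  shows "bdd_above {x. vec2 x y \<in> S}"
proof -
  obtain B where B: "\<And>p. p \<in> S \<Longrightarrow> norm p \<le> B"
    using assms bounded_iff by blast
  show ?thesis
  proof (rule bdd_aboveI)
    fix x assume "x \<in> {x. vec2 x y \<in> S}"
    then have "\<bar>vec2 x y $ 1\<bar> \<le> B"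
      using B component_le_norm_cart order_trans by blast
    then show "x \<le> B" by simp
  qed
qed

lemma row_max_ge:
  assumes "bounded S" "vec2 x y \<in> S"
  shows "x \<le> row_max S y"
  unfolding row_max_def using assms bdd_above_row by (intro cSup_upper) auto

lemma row_max_mem:
  assumes "compact S" "vec2 x y \<in> S"
  shows "vec2 (row_max S y) y \<in> S"
proof -
  have "closed ((\<lambda>x. vec2 x y) -` S)"
    using assms(1) by (intro continuous_closed_vimage isCont_vec2_first compact_imp_closed)
  then have "closed {x. vec2 x y \<in> S}" by (simp add: vimage_def)
  then have "row_max S y \<in> {x. vec2 x y \<in> S}"
    unfolding row_max_def using assms bdd_above_row[OF compact_imp_bounded]
    by (intro closed_contains_Sup) auto
  then show ?thesis by simp
qed

lemma row_max_concave:
  assumes "compact S" "convex S" and rows: "\<And>y. y \<in> {\<alpha>..\<beta>} \<Longrightarrow> \<exists>x. vec2 x y \<in> S"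
  shows "concave_on {\<alpha>..\<beta>} (row_max S)"
  unfolding concave_on_iff
proof (intro conjI convex_real_interval ballI allI impI)
  fix y1 y2 u v :: real
  assume y: "y1 \<in> {\<alpha>..\<beta>}" "y2 \<in> {\<alpha>..\<beta>}" and uv: "0 \<le> u" "0 \<le> v" "u + v = 1"
  have "vec2 (row_max S y1) y1 \<in> S" "vec2 (row_max S y2) y2 \<in> S"
    using rows y row_max_mem[OF assms(1)] by blast+
  then have "u *\<^sub>R vec2 (row_max S y1) y1 + v *\<^sub>R vec2 (row_max S y2) y2 \<in> S"
    using assms(2) uv by (intro convexD) auto
  then have "vec2 (u * row_max S y1 + v * row_max S y2) (u * y1 + v * y2) \<in> S"
    by (simp add: vec2_add vec2_scaleR)
  then show "u * row_max S y1 + v * row_max S y2 \<le> row_max S (u *\<^sub>R y1 + v *\<^sub>R y2)"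
    using row_max_ge compact_imp_bounded[OF assms(1)] by simp
qed

lemma row_max_superlevel_closed:
  assumes "compact S" and rows: "\<And>y. y \<in> {\<alpha>..\<beta>} \<Longrightarrow> \<exists>x. vec2 x y \<in> S"
  shows "closed {y \<in> {\<alpha>..\<beta>}. a \<le> row_max S y}"
proof -
  have "{y \<in> {\<alpha>..\<beta>}. a \<le> row_max S y} = {\<alpha>..\<beta>} \<inter> (\<lambda>p. p$2) ` (S \<inter> {p. a \<le> p$1})"
  proof (intro equalityI subsetI)
    fix y assume "y \<in> {y \<in> {\<alpha>..\<beta>}. a \<le> row_max S y}"
    then show "y \<in> {\<alpha>..\<beta>} \<inter> (\<lambda>p. p$2) ` (S \<inter> {p. a \<le> p$1})"
      using rows row_max_mem[OF assms(1)] by (force intro: image_eqI[of _ _ "vec2 (row_max S y) y"])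
  next
    fix y assume "y \<in> {\<alpha>..\<beta>} \<inter> (\<lambda>p. p$2) ` (S \<inter> {p. a \<le> p$1})"
    then obtain p where "y \<in> {\<alpha>..\<beta>}" "p \<in> S" "a \<le> p$1" "y = p$2" by auto
    moreover have "p$1 \<le> row_max S (p$2)"
      using row_max_ge[OF compact_imp_bounded[OF assms(1)], of "p$1" "p$2"] \<open>p \<in> S\<close> by simp
    ultimately show "y \<in> {y \<in> {\<alpha>..\<beta>}. a \<le> row_max S y}" by auto
  qed
  moreover have "compact ((\<lambda>p. p$2) ` (S \<inter> {p::real^2. a \<le> p$1}))"
    by (intro compact_continuous_image compact_Int_closed assms(1) closed_Collect_le continuous_intros)
  ultimately show ?thesis by (simp add: closed_Int compact_imp_closed)
qed

lemma continuous_on_row_max: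
  assumes "compact S" "convex S" and "\<And>y. y \<in> {\<alpha>..\<beta>} \<Longrightarrow> \<exists>x. vec2 x y \<in> S"
  shows "continuous_on {\<alpha>..\<beta>} (row_max S)"
  using assms by (intro concave_on_Icc_continuous_on row_max_concave row_max_superlevel_closed)

lemma frontier_if_ray_outside:
  fixes S :: "'a::real_normed_vector set"
  assumes "p \<in> S" "d \<noteq> 0" "\<And>e. 0 < e \<Longrightarrow> p + e *\<^sub>R d \<notin> S"
  shows "p \<in> frontier S"
proof -
  have "p \<notin> interior S"
  proof
    assume "p \<in> interior S"
    then obtain r where r: "0 < r" "ball p r \<subseteq> S" using mem_interior by blast
    define e where "e = r / (2 * norm d)"
    have e: "0 < e" using r assms(2) by (simp add: e_def)
    have "dist p (p + e *\<^sub>R d) = r / 2" using r(1) assms(2) by (simp add: dist_norm e_def)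
    then have "p + e *\<^sub>R d \<in> S" using r by auto
    then show False using assms(3)[OF e] by contradiction
  qed
  then show ?thesis using assms(1) closure_subset by (auto simp: frontier_def)
qed

lemma row_max_frontier:
  assumes "compact S" "vec2 x y \<in> S"
  shows "vec2 (row_max S y) y \<in> frontier S"
proof (rule frontier_if_ray_outside)
  show "vec2 (row_max S y) y \<in> S" using assms by (rule row_max_mem)
  show "vec2 1 0 \<noteq> 0" by simp
  fix e :: real assume "0 < e"
  then show "vec2 (row_max S y) y + e *\<^sub>R vec2 1 0 \<notin> S"
    using row_max_ge[OF compact_imp_bounded[OF assms(1)], of "row_max S y + e" y]
    by (auto simp: vec2_add vec2_scaleR)
qed

definition reflect_x :: "real^2 \<Rightarrow> real^2" where
  "reflect_x p = vec2 (- p$1) (p$2)"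

definition swap_xy :: "real^2 \<Rightarrow> real^2" where
  "swap_xy p = vec2 (p$2) (p$1)"

lemma reflect_x_vec2 [simp]: "reflect_x (vec2 a b) = vec2 (- a) b"
  and reflect_x_nth [simp]: "reflect_x p $ 1 = - p$1" "reflect_x p $ 2 = p$2"
  and reflect_x_reflect_x [simp]: "reflect_x (reflect_x p) = p"
  by (simp_all add: reflect_x_def)

lemma swap_xy_vec2 [simp]: "swap_xy (vec2 a b) = vec2 b a"
  and swap_xy_swap_xy [simp]: "swap_xy (swap_xy p) = p"
  by (simp_all add: swap_xy_def)

lemma linear_reflect_x: "linear reflect_x"
  and linear_swap_xy: "linear swap_xy"
  by (auto intro!: linearI simp: reflect_x_def swap_xy_def vec2_add vec2_scaleR)

lemma inj_reflect_x: "inj reflect_x"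
  by (metis injI reflect_x_reflect_x)

lemma mem_reflect_x_image: "p \<in> reflect_x ` S \<longleftrightarrow> reflect_x p \<in> S"
  by (metis image_iff reflect_x_reflect_x)

lemma mem_swap_xy_image: "p \<in> swap_xy ` S \<longleftrightarrow> swap_xy p \<in> S"
  by (metis image_iff swap_xy_swap_xy)

lemma compact_linear_image:
  fixes f :: "'a::euclidean_space \<Rightarrow> 'b::real_normed_vector"
  shows "linear f \<Longrightarrow> compact S \<Longrightarrow> compact (f ` S)"
  by (metis compact_continuous_image linear_continuous_on linear_conv_bounded_linear)

lemma frontier_injective_linear_image:
  fixes f :: "'a::euclidean_space \<Rightarrow> 'a"
  assumes "linear f" "inj f"
  shows "frontier (f ` S) = f ` frontier S"
  using assms by (simp add: frontier_def closure_injective_linear_image[symmetric]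
      interior_injective_linear_image image_set_diff)

definition row_min :: "(real^2) set \<Rightarrow> real \<Rightarrow> real" where
  "row_min S y = Inf {x. vec2 x y \<in> S}"

definition col_max :: "(real^2) set \<Rightarrow> real \<Rightarrow> real" where
  "col_max S x = Sup {y. vec2 x y \<in> S}"

lemma row_min_eq_row_max_reflect: "row_min S y = - row_max (reflect_x ` S) y"
proof -
  have "{x. vec2 x y \<in> reflect_x ` S} = uminus ` {x. vec2 x y \<in> S}"
    by (force simp: mem_reflect_x_image)
  then show ?thesis by (simp add: row_min_def row_max_def Inf_real_def)
qed

lemma col_max_eq_row_max_swap: "col_max S x = row_max (swap_xy ` S) x"
  by (simp add: col_max_def row_max_def mem_swap_xy_image)

lemma row_min_le:
  assumes "bounded S" "vec2 x y \<in> S"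
  shows "row_min S y \<le> x"
proof -
  have "- x \<le> row_max (reflect_x ` S) y"
    using assms linear_reflect_x
    by (intro row_max_ge) (auto simp: mem_reflect_x_image bounded_linear_image linear_conv_bounded_linear)
  then show ?thesis by (simp add: row_min_eq_row_max_reflect)
qed

lemma row_min_mem:
  assumes "compact S" "vec2 x y \<in> S"
  shows "vec2 (row_min S y) y \<in> S"
proof -
  have "vec2 (- x) y \<in> reflect_x ` S" using assms(2) by (simp add: mem_reflect_x_image)
  then have "vec2 (row_max (reflect_x ` S) y) y \<in> reflect_x ` S"
    using assms(1) by (intro row_max_mem compact_linear_image linear_reflect_x)
  then show ?thesis by (simp add: row_min_eq_row_max_reflect mem_reflect_x_image)
qed

lemma continuous_on_row_min:
  assumes "compact S" "convex S" and rows: "\<And>y. y \<in> {\<alpha>..\<beta>} \<Longrightarrow> \<exists>x. vec2 x y \<in> S"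
  shows "continuous_on {\<alpha>..\<beta>} (row_min S)"
proof -
  have "continuous_on {\<alpha>..\<beta>} (row_max (reflect_x ` S))"
  proof (rule continuous_on_row_max)
    show "compact (reflect_x ` S)" "convex (reflect_x ` S)"
      using assms linear_reflect_x by (auto intro: compact_linear_image convex_linear_image)
    show "\<exists>x. vec2 x y \<in> reflect_x ` S" if "y \<in> {\<alpha>..\<beta>}" for y
      using rows[OF that] by (auto simp: mem_reflect_x_image intro: exI[of _ "- _"])
  qed
  then show ?thesis
    unfolding row_min_eq_row_max_reflect[abs_def] by (rule continuous_on_minus)
qed

lemma row_min_frontier:
  assumes "compact S" "vec2 x y \<in> S"
  shows "vec2 (row_min S y) y \<in> frontier S"
proof (rule frontier_if_ray_outside)
  show "vec2 (row_min S y) y \<in> S" using assms by (rule row_min_mem)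
  show "vec2 (-1) 0 \<noteq> 0" by simp
  fix e :: real assume "0 < e"
  then show "vec2 (row_min S y) y + e *\<^sub>R vec2 (-1) 0 \<notin> S"
    using row_min_le[OF compact_imp_bounded[OF assms(1)], of "row_min S y - e" y]
    by (auto simp: vec2_add vec2_scaleR)
qed

lemma col_max_ge:
  assumes "bounded S" "vec2 x y \<in> S"
  shows "y \<le> col_max S x"
  unfolding col_max_eq_row_max_swap using assms linear_swap_xy
  by (intro row_max_ge) (auto simp: mem_swap_xy_image bounded_linear_image linear_conv_bounded_linear)

lemma col_max_mem:
  assumes "compact S" "vec2 x y \<in> S"
  shows "vec2 x (col_max S x) \<in> S"
proof -
  have "vec2 (row_max (swap_xy ` S) x) x \<in> swap_xy ` S"
    using assms by (intro row_max_mem compact_linear_image linear_swap_xy)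
      (auto simp: mem_swap_xy_image)
  then show ?thesis by (simp add: col_max_eq_row_max_swap mem_swap_xy_image)
qed

lemma continuous_on_col_max:
  assumes "compact S" "convex S" and cols: "\<And>x. x \<in> {\<alpha>..\<beta>} \<Longrightarrow> \<exists>y. vec2 x y \<in> S"
  shows "continuous_on {\<alpha>..\<beta>} (col_max S)"
  unfolding col_max_eq_row_max_swap[abs_def]
proof (rule continuous_on_row_max)
  show "compact (swap_xy ` S)" "convex (swap_xy ` S)"
    using assms linear_swap_xy by (auto intro: compact_linear_image convex_linear_image)
  show "\<exists>y. vec2 y x \<in> swap_xy ` S" if "x \<in> {\<alpha>..\<beta>}" for x
    using cols[OF that] by (auto simp: mem_swap_xy_image)
qed

lemma col_max_frontier:
  assumes "compact S" "vec2 x y \<in> S"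
  shows "vec2 x (col_max S x) \<in> frontier S"
proof (rule frontier_if_ray_outside)
  show "vec2 x (col_max S x) \<in> S" using assms by (rule col_max_mem)
  show "vec2 0 1 \<noteq> 0" by simp
  fix e :: real assume "0 < e"
  then show "vec2 x (col_max S x) + e *\<^sub>R vec2 0 1 \<notin> S"
    using col_max_ge[OF compact_imp_bounded[OF assms(1)], of x "col_max S x + e"]
    by (auto simp: vec2_add vec2_scaleR)
qed

lemma bottom_frontier:
  assumes "vec2 x y \<in> S" "\<And>q. q \<in> S \<Longrightarrow> y \<le> q$2"
  shows "vec2 x y \<in> frontier S"
proof (rule frontier_if_ray_outside)
  show "vec2 0 (-1) \<noteq> 0" by simp
  fix e :: real assume "0 < e"
  then show "vec2 x y + e *\<^sub>R vec2 0 (-1) \<notin> S"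
    using assms(2)[of "vec2 x (y - e)"] by (auto simp: vec2_add vec2_scaleR)
qed (rule assms(1))

lemma convex_component_level:
  fixes S :: "(real^'n) set"
  assumes "convex S" "A \<in> S" "B \<in> S" "A$k \<le> c" "c \<le> B$k"
  obtains q where "q \<in> S" "q$k = c" "q$j \<in> closed_segment (A$j) (B$j)"
proof -
  obtain q where q: "q \<in> closed_segment A B" "q$k = c"
    using connected_ivt_component_cart[OF connected_segment ends_in_segment assms(4,5)] by blast
  have "q \<in> S" using q(1) assms(1-3) convex_contains_segment by blast
  moreover have "q$j \<in> closed_segment (A$j) (B$j)"
    using q(1) closed_segment_linear_image[of "\<lambda>p. p$j" A B] bounded_linear.linear[OF bounded_linear_vec_nth]
    by auto
  ultimately show thesis using q(2) that by blast
qed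

lemma convex_row_between:
  assumes "convex S" "vec2 x1 y \<in> S" "vec2 x2 y \<in> S" "x1 \<le> x" "x \<le> x2"
  shows "vec2 x y \<in> S"
proof (cases "x1 = x2")
  case True then show ?thesis using assms by auto
next
  case False
  then have lt: "x1 < x2" using assms by auto
  define l where "l = (x - x1) / (x2 - x1)"
  have l: "0 \<le> l" "l \<le> 1" "l * (x2 - x1) = x - x1" using assms lt by (auto simp: l_def field_simps)
  have "(1 - l) *\<^sub>R vec2 x1 y + l *\<^sub>R vec2 x2 y \<in> S" using assms l by (intro convexD) auto
  moreover have "(1 - l) *\<^sub>R vec2 x1 y + l *\<^sub>R vec2 x2 y = vec2 x y"
    using l(3) by (simp add: vec2_scaleR vec2_add algebra_simps)
  ultimately show ?thesis by simp
qed

lemma convex_row_nondegenerate: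
  assumes "convex S" "A \<in> S" "P \<in> S" "X \<in> S" "P$2 = X$2" "P$1 < X$1"
    and y: "A$2 < y \<and> y \<le> P$2 \<or> P$2 \<le> y \<and> y < A$2"
  obtains x x' where "x < x'" "vec2 x y \<in> S" "vec2 x' y \<in> S"
proof -
  define l where "l = (y - A$2) / (P$2 - A$2)"
  have l: "0 < l" "l \<le> 1" "l * (P$2 - A$2) = y - A$2" using y by (auto simp: l_def field_simps)
  define q where "q = (1 - l) *\<^sub>R A + l *\<^sub>R P"
  define r where "r = (1 - l) *\<^sub>R A + l *\<^sub>R X"
  have "q \<in> S" "r \<in> S" using assms l unfolding q_def r_def by (auto intro: convexD)
  moreover have "q$2 = y" "r$2 = y" using l(3) assms(5) by (simp_all add: q_def r_def algebra_simps)
  moreover have "q$1 < r$1" using l(1) assms(6) by (simp add: q_def r_def)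
  ultimately show thesis by (metis that vec2_eta)
qed

subsection \<open>Axis-parallel right triangles on the frontier of a convex body\<close>

definition axis_right_triangle :: "(real^2) set \<Rightarrow> real^2 \<Rightarrow> bool" where
  "axis_right_triangle S d \<longleftrightarrow>
     (\<exists>u\<in>S. \<exists>v\<in>S. \<exists>w\<in>S. \<exists>t. t \<noteq> 0 \<and> u - v = t *\<^sub>R d \<and> w$1 = u$1 \<and> w$2 = v$2)"

lemma axis_right_triangle_mono:
  "S \<subseteq> T \<Longrightarrow> axis_right_triangle S d \<Longrightarrow> axis_right_triangle T d"
  unfolding axis_right_triangle_def by blast

lemma axis_right_triangle_uminus:
  assumes "axis_right_triangle S (- d)"
  shows "axis_right_triangle S d"
proof -
  obtain u v w t where uvw: "u \<in> S" "v \<in> S" "w \<in> S" "w$1 = u$1" "w$2 = v$2"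
    and t: "t \<noteq> 0" "u - v = t *\<^sub>R (- d)"
    using assms unfolding axis_right_triangle_def by blast
  from t have "- t \<noteq> 0" "u - v = (- t) *\<^sub>R d" by simp_all
  with uvw show ?thesis unfolding axis_right_triangle_def by blast
qed

lemma axis_right_triangle_reflect_x:
  assumes "axis_right_triangle (reflect_x ` S) (reflect_x d)"
  shows "axis_right_triangle S d"
proof -
  obtain u v w t where uvw: "u \<in> reflect_x ` S" "v \<in> reflect_x ` S" "w \<in> reflect_x ` S"
    and t: "t \<noteq> 0" "u - v = t *\<^sub>R reflect_x d" "w$1 = u$1" "w$2 = v$2"
    using assms unfolding axis_right_triangle_def by blast
  have "reflect_x u - reflect_x v = t *\<^sub>R d"
    using t(2) linear_diff[OF linear_reflect_x, of u v] linear_scale[OF linear_reflect_x, of t]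
    by (metis reflect_x_reflect_x)
  moreover have "reflect_x w $ 1 = reflect_x u $ 1" "reflect_x w $ 2 = reflect_x v $ 2"
    using t(3,4) by simp_all
  ultimately show ?thesis
    using uvw t(1) unfolding axis_right_triangle_def mem_reflect_x_image by blast
qed

locale axis_extremal_body =
  fixes K :: "(real^2) set" and p1 p2 p3 p4 :: "real^2"
  assumes compact_K: "compact K" and convex_K: "convex K"
    and extremals_in: "p1 \<in> K" "p2 \<in> K" "p3 \<in> K" "p4 \<in> K"
    and left: "\<And>q. q \<in> K \<Longrightarrow> p1$1 \<le> q$1"
    and bottom: "\<And>q. q \<in> K \<Longrightarrow> p2$2 \<le> q$2"
    and right: "\<And>q. q \<in> K \<Longrightarrow> q$1 \<le> p3$1"
    and top: "\<And>q. q \<in> K \<Longrightarrow> q$2 \<le> p4$2"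
    and strict_x: "p1$1 < p2$1" "p1$1 < p4$1" "p2$1 < p3$1" "p4$1 < p3$1"
    and strict_y: "p2$2 < p1$2" "p2$2 < p3$2" "p1$2 < p4$2" "p3$2 < p4$2"
begin

lemma bounded_K: "bounded K"
  using compact_K by (rule compact_imp_bounded)

lemma row_nonempty:
  assumes "y \<in> {p2$2..p4$2}"
  obtains x where "vec2 x y \<in> K" "min (p2$1) (p4$1) \<le> x" "x \<le> max (p2$1) (p4$1)"
proof -
  obtain q where "q \<in> K" "q$2 = y" "q$1 \<in> closed_segment (p2$1) (p4$1)"
    using convex_component_level[OF convex_K extremals_in(2,4), where k=2 and c=y and j=1] assms by auto
  then show thesis using that[of "q$1"] by (auto simp: closed_segment_eq_real_ivl split: if_splits)
qed

lemma column_nonempty: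
  assumes "x \<in> {p1$1..p3$1}"
  obtains y where "vec2 x y \<in> K" "min (p1$2) (p3$2) \<le> y"
proof -
  obtain q where "q \<in> K" "q$1 = x" "q$2 \<in> closed_segment (p1$2) (p3$2)"
    using convex_component_level[OF convex_K extremals_in(1,3), where k=1 and c=x and j=2] assms by auto
  then show thesis using that[of "q$2"] by (auto simp: closed_segment_eq_real_ivl split: if_splits)
qed

lemma row_max_in_K: "y \<in> {p2$2..p4$2} \<Longrightarrow> vec2 (row_max K y) y \<in> K"
  and row_min_in_K: "y \<in> {p2$2..p4$2} \<Longrightarrow> vec2 (row_min K y) y \<in> K"
  and row_max_frontier_K: "y \<in> {p2$2..p4$2} \<Longrightarrow> vec2 (row_max K y) y \<in> frontier K"
  and row_min_frontier_K: "y \<in> {p2$2..p4$2} \<Longrightarrow> vec2 (row_min K y) y \<in> frontier K"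
  by (metis row_nonempty compact_K row_max_mem row_min_mem row_max_frontier row_min_frontier)+

lemma col_max_in_K: "x \<in> {p1$1..p3$1} \<Longrightarrow> vec2 x (col_max K x) \<in> K"
  and col_max_frontier_K: "x \<in> {p1$1..p3$1} \<Longrightarrow> vec2 x (col_max K x) \<in> frontier K"
  by (metis column_nonempty compact_K col_max_mem col_max_frontier)+

lemma row_max_range: "y \<in> {p2$2..p4$2} \<Longrightarrow> row_max K y \<in> {p1$1..p3$1}"
  using row_max_in_K left right by fastforce

lemma col_max_above_bottom:
  assumes "x \<in> {p1$1..p3$1}"
  shows "p2$2 < col_max K x"
proof -
  obtain y where "vec2 x y \<in> K" "min (p1$2) (p3$2) \<le> y" using column_nonempty assms .
  then show ?thesis using col_max_ge[OF bounded_K] strict_y(1,2) by fastforce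
qed

lemma row_min_less_row_max:
  assumes "p2$2 < y" "y < p4$2"
  shows "row_min K y < row_max K y"
proof -
  obtain x0 where x0: "vec2 x0 (p1$2) \<in> K" "min (p2$1) (p4$1) \<le> x0"
    using row_nonempty strict_y(1,3) by (metis atLeastAtMost_iff less_imp_le)
  have P: "p1$2 = vec2 x0 (p1$2) $ 2" "p1$1 < vec2 x0 (p1$2) $ 1" using x0(2) strict_x(1,2) by auto
  have "\<exists>x x'. x < x' \<and> vec2 x y \<in> K \<and> vec2 x' y \<in> K"
  proof (cases "y \<le> p1$2")
    case True
    then have "p2$2 < y \<and> y \<le> p1$2 \<or> p1$2 \<le> y \<and> y < p2$2" using assms by simp
    from convex_row_nondegenerate[OF convex_K extremals_in(2,1) x0(1) P this] show ?thesis by blast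
  next
    case False
    then have "p4$2 < y \<and> y \<le> p1$2 \<or> p1$2 \<le> y \<and> y < p4$2" using assms by simp
    from convex_row_nondegenerate[OF convex_K extremals_in(4,1) x0(1) P this] show ?thesis by blast
  qed
  then show ?thesis using row_min_le[OF bounded_K] row_max_ge[OF bounded_K] by fastforce
qed

lemma right_edge_top:
  defines "ys \<equiv> col_max K (p3$1)"
  shows "p2$2 < ys" "ys \<le> p4$2" "row_max K ys = p3$1" "row_min K ys < p3$1"
proof -
  have "p3$2 \<le> ys" unfolding ys_def using col_max_ge[OF bounded_K, of "p3$1" "p3$2"] extremals_in(3) by simp
  then show "p2$2 < ys" using strict_y(2) by linarith
  have ysK: "vec2 (p3$1) ys \<in> K"
    unfolding ys_def using strict_x(1,3) by (intro col_max_in_K) auto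
  then show "ys \<le> p4$2" using top by fastforce
  have "vec2 (row_max K ys) ys \<in> K"
    using \<open>p2$2 < ys\<close> \<open>ys \<le> p4$2\<close> by (intro row_max_in_K) auto
  then show "row_max K ys = p3$1" using row_max_ge[OF bounded_K ysK] right by fastforce
  obtain x where "vec2 x ys \<in> K" "x \<le> max (p2$1) (p4$1)"
    using row_nonempty \<open>p2$2 < ys\<close> \<open>ys \<le> p4$2\<close> by (metis atLeastAtMost_iff less_imp_le)
  then show "row_min K ys < p3$1" using row_min_le[OF bounded_K] strict_x(3,4) by fastforce
qed

lemma triangle_from_row:
  assumes y: "y \<in> {p2$2..p4$2}" and v: "vec2 x y \<in> frontier K" and "t \<noteq> 0"
    and hyp: "vec2 (row_max K y - x) (col_max K (row_max K y) - y) = t *\<^sub>R d"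
  shows "axis_right_triangle (frontier K) d"
proof -
  let ?s = "row_max K y"
  have u: "vec2 ?s (col_max K ?s) \<in> frontier K" using col_max_frontier_K row_max_range y by blast
  have w: "vec2 ?s y \<in> frontier K" using row_max_frontier_K y .
  have "vec2 ?s (col_max K ?s) - vec2 x y = t *\<^sub>R d" using hyp by (simp add: vec2_diff)
  then show ?thesis unfolding axis_right_triangle_def using \<open>t \<noteq> 0\<close>
    by (intro bexI[OF _ u] bexI[OF _ v] bexI[OF _ w] exI[of _ t]) simp
qed

text \<open>The cross product of \<open>d\<close> with the vector from the left end of row \<open>y\<close> to the highest
  point above its right end; it vanishes when the two are parallel.\<close>
definition cross_gap :: "real^2 \<Rightarrow> real \<Rightarrow> real" where
  "cross_gap d y = d$1 * (col_max K (row_max K y) - y) - d$2 * (row_max K y - row_min K y)"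

lemma continuous_on_cross_gap: "continuous_on {p2$2..p4$2} (cross_gap d)"
proof -
  have rows: "\<And>y. y \<in> {p2$2..p4$2} \<Longrightarrow> \<exists>x. vec2 x y \<in> K"
    by (metis row_nonempty)
  have R: "continuous_on {p2$2..p4$2} (row_max K)"
    by (rule continuous_on_row_max[OF compact_K convex_K rows])
  have T: "continuous_on {p1$1..p3$1} (col_max K)"
    by (rule continuous_on_col_max[OF compact_K convex_K]) (metis column_nonempty)
  have "continuous_on {p2$2..p4$2} (\<lambda>y. col_max K (row_max K y))"
    by (rule continuous_on_compose2[OF T R]) (use row_max_range in auto)
  then show ?thesis
    unfolding cross_gap_def[abs_def]
    by (intro continuous_intros R continuous_on_row_min[OF compact_K convex_K rows])
qed

lemma triangle_if_cross_gap_bottom: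
  assumes d: "0 \<le> d$1" "0 \<le> d$2" "d \<noteq> 0" and gap: "cross_gap d (p2$2) \<le> 0"
  shows "axis_right_triangle (frontier K) d"
proof -
  define s where "s = row_max K (p2$2)"
  have y: "p2$2 \<in> {p2$2..p4$2}" using strict_y(1,3) by simp
  have high: "p2$2 < col_max K s" unfolding s_def using row_max_range[OF y] by (rule col_max_above_bottom)
  have "d$2 \<noteq> 0"
  proof
    assume "d$2 = 0"
    then have "0 < d$1" using d by (metis vec2_eq_0_iff vec2_eta order_less_le)
    then have "0 < d$1 * (col_max K s - p2$2)" using high by simp
    then show False using gap by (simp add: cross_gap_def s_def \<open>d$2 = 0\<close>)
  qed
  then have b: "0 < d$2" using d by simp
  define t where "t = (col_max K s - p2$2) / d$2"
  have t: "0 < t" "t * d$2 = col_max K s - p2$2" using high b by (simp_all add: t_def)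
  have "d$1 * (col_max K s - p2$2) \<le> d$2 * (s - row_min K (p2$2))"
    using gap by (simp add: cross_gap_def s_def)
  then have "row_min K (p2$2) \<le> s - t * d$1"
    using b unfolding t_def by (simp add: field_simps mult.commute)
  moreover have "s - t * d$1 \<le> s" using t(1) d(1) by simp
  ultimately have "vec2 (s - t * d$1) (p2$2) \<in> K"
    using convex_row_between[OF convex_K row_min_in_K[OF y] row_max_in_K[OF y]] unfolding s_def by blast
  then have "vec2 (s - t * d$1) (p2$2) \<in> frontier K" using bottom by (rule bottom_frontier)
  moreover have "t \<noteq> 0" using t(1) by simp
  moreover have "vec2 (s - (s - t * d$1)) (col_max K s - p2$2) = t *\<^sub>R d"
    using t(2) by (metis add_diff_cancel_left' diff_add_cancel vec2_eta vec2_scaleR)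
  ultimately show ?thesis unfolding s_def by (rule triangle_from_row[OF y])
qed

lemma triangle_if_cross_gap_zero:
  assumes d: "0 \<le> d$1" "0 \<le> d$2" "d \<noteq> 0"
    and y: "p2$2 < y" "y \<le> col_max K (p3$1)" and gap: "cross_gap d y = 0"
  shows "axis_right_triangle (frontier K) d"
proof -
  have yr: "y \<in> {p2$2..p4$2}" using y right_edge_top(2) by auto
  have wide: "row_min K y < row_max K y"
  proof (cases "y = col_max K (p3$1)")
    case True
    then show ?thesis using right_edge_top(3,4) by simp
  next
    case False
    then show ?thesis using y right_edge_top(2) by (intro row_min_less_row_max) auto
  qed
  have "d$1 \<noteq> 0"
  proof
    assume "d$1 = 0"
    then have "0 < d$2" using d by (metis vec2_eq_0_iff vec2_eta order_less_le)
    then show False using gap wide by (simp add: cross_gap_def \<open>d$1 = 0\<close>)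
  qed
  then have a: "0 < d$1" using d by simp
  define t where "t = (row_max K y - row_min K y) / d$1"
  have t: "0 < t" "t * d$1 = row_max K y - row_min K y" using wide a by (simp_all add: t_def)
  have "d$1 * (col_max K (row_max K y) - y) = d$2 * (row_max K y - row_min K y)"
    using gap by (simp add: cross_gap_def)
  then have "t * d$2 = col_max K (row_max K y) - y"
    using a unfolding t_def by (simp add: field_simps mult.commute)
  then have "vec2 (row_max K y - row_min K y) (col_max K (row_max K y) - y) = t *\<^sub>R d"
    using t(2) by (metis vec2_eta vec2_scaleR)
  with \<open>0 < t\<close> show ?thesis by (intro triangle_from_row[OF yr row_min_frontier_K[OF yr], where t=t]) auto
qed

theorem frontier_triangle_first_quadrant:
  assumes d: "0 \<le> d$1" "0 \<le> d$2" "d \<noteq> 0"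
  shows "axis_right_triangle (frontier K) d"
proof (cases "cross_gap d (p2$2) \<le> 0")
  case True
  show ?thesis using d True by (rule triangle_if_cross_gap_bottom)
next
  case False
  let ?ys = "col_max K (p3$1)"
  have "cross_gap d ?ys \<le> 0"
    using right_edge_top(3,4) d(2) by (simp add: cross_gap_def)
  moreover have "continuous_on {p2$2..?ys} (cross_gap d)"
    using right_edge_top(2) by (intro continuous_on_subset[OF continuous_on_cross_gap]) auto
  moreover have "0 \<le> cross_gap d (p2$2)" "p2$2 \<le> ?ys" using False right_edge_top(1) by auto
  ultimately obtain y where y: "p2$2 \<le> y" "y \<le> ?ys" and zero: "cross_gap d y = 0"
    using IVT2'[where f="cross_gap d" and a="p2$2" and b="?ys" and y=0] by blast
  have "p2$2 < y" using y(1) zero False by (cases "y = p2$2") auto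
  then show ?thesis using triangle_if_cross_gap_zero[OF d _ y(2) zero] by blast
qed

lemma reflect_x_body:
  "axis_extremal_body (reflect_x ` K) (reflect_x p3) (reflect_x p2) (reflect_x p1) (reflect_x p4)"
proof
  show "compact (reflect_x ` K)" using compact_K linear_reflect_x by (rule compact_linear_image[rotated])
  show "convex (reflect_x ` K)" using convex_K linear_reflect_x by (rule convex_linear_image[rotated])
qed (use extremals_in strict_x strict_y in \<open>auto simp: mem_reflect_x_image dest: left bottom right top\<close>)

lemma frontier_triangle_upper_half:
  assumes d: "0 \<le> d$2" "d \<noteq> 0"
  shows "axis_right_triangle (frontier K) d"
proof (cases "0 \<le> d$1")
  case True
  then show ?thesis using d by (intro frontier_triangle_first_quadrant)
next
  case False
  interpret reflected: axis_extremal_body "reflect_x ` K" "reflect_x p3" "reflect_x p2" "reflect_x p1" "reflect_x p4"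
    by (rule reflect_x_body)
  have "reflect_x d \<noteq> 0" using d(2) by (metis reflect_x_reflect_x linear_0[OF linear_reflect_x])
  then have "axis_right_triangle (frontier (reflect_x ` K)) (reflect_x d)"
    using False d(1) by (intro reflected.frontier_triangle_first_quadrant) auto
  then show ?thesis
    unfolding frontier_injective_linear_image[OF linear_reflect_x inj_reflect_x]
    by (rule axis_right_triangle_reflect_x)
qed

theorem frontier_axis_right_triangle:
  assumes "d \<noteq> 0"
  shows "axis_right_triangle (frontier K) d"
proof (cases "0 \<le> d$2")
  case True
  then show ?thesis using assms by (rule frontier_triangle_upper_half)
next
  case False
  then have "axis_right_triangle (frontier K) (- d)" using assms by (intro frontier_triangle_upper_half) auto
  then show ?thesis by (rule axis_right_triangle_uminus)
qed

end

subsection \<open>Jordan curves\<close>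

lemma jordan_curve_frontier_inside:
  assumes "jordan_curve C" "connected (inside C)"
  shows "frontier (inside C) = C"
proof -
  obtain g where g: "simple_path g" "pathfinish g = pathstart g" "path_image g = C"
    using assms(1) by (auto simp: jordan_curve_def)
  have "C homeomorphic sphere (0::complex) 1"
    using homeomorphic_simple_path_image_circle[OF g(1,2)] g(3) by simp
  moreover have "sphere (0::complex) 1 homeomorphic sphere (0::real^2) 1"
    by (rule homeomorphic_spheres_gen) auto
  ultimately have sphere: "C homeomorphic sphere (0::real^2) 1"
    by (rule homeomorphic_trans)
  have "bounded C" using g by (metis bounded_simple_path_image)
  have "inside C \<noteq> {}"
  proof
    assume "inside C = {}"
    then have "connected (- C)" using connected_outside[OF \<open>bounded C\<close>] by (simp flip: inside_Un_outside)
    then show False using Jordan_Brouwer_separation[OF sphere] by simp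
  qed
  then have "inside C \<in> components (- C)" using assms(2) by (simp add: inside_in_components)
  then show ?thesis using Jordan_Brouwer_frontier[OF sphere] by simp
qed

lemma jordan_curve_compact: "jordan_curve C \<Longrightarrow> compact C"
  unfolding jordan_curve_def by (metis compact_path_image simple_path_imp_path)

lemma closure_inside_subset_convex:
  fixes S T :: "'a::{real_normed_vector, perfect_space} set"
  assumes "closed T" "convex T" "S \<subseteq> T"
  shows "closure (inside S) \<subseteq> T"
proof -
  have "inside S \<subseteq> T" using outside_subset_convex[OF assms(2,3)] inside_Int_outside[of S] by blast
  then show ?thesis using assms(1) by (rule closure_minimal)
qed

lemma closure_inside_component_ge:
  fixes S :: "(real^'n) set"
  assumes "\<And>c. c \<in> S \<Longrightarrow> a \<le> c$i" "q \<in> closure (inside S)"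
  shows "a \<le> q$i"
proof -
  have "convex {x::real^'n. a \<le> x$i}"
    using convex_halfspace_ge[of a "axis i (1::real)"] by (simp add: inner_axis')
  then have "closure (inside S) \<subseteq> {x. a \<le> x$i}"
    using assms(1) by (intro closure_inside_subset_convex closed_halfspace_component_ge_cart) auto
  then show ?thesis using assms(2) by auto
qed

lemma closure_inside_component_le:
  fixes S :: "(real^'n) set"
  assumes "\<And>c. c \<in> S \<Longrightarrow> c$i \<le> a" "q \<in> closure (inside S)"
  shows "q$i \<le> a"
proof -
  have "convex {x::real^'n. x$i \<le> a}"
    using convex_halfspace_le[of "axis i (1::real)" a] by (simp add: inner_axis')
  then have "closure (inside S) \<subseteq> {x. x$i \<le> a}"
    using assms(1) by (intro closure_inside_subset_convex closed_halfspace_component_le_cart) auto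
  then show ?thesis using assms(2) by auto
qed

lemma frontier_closure_subset: "frontier (closure S) \<subseteq> frontier S"
  unfolding frontier_def using interior_mono[OF closure_subset, of S] by auto

lemma closure_inside_axis_extremal_body:
  fixes C :: "(real^2) set"
  assumes C: "jordan_curve C" "convex (inside C)"
    and in_C: "c1 \<in> C" "c2 \<in> C" "c3 \<in> C" "c4 \<in> C"
    and bounds: "\<And>c. c \<in> C \<Longrightarrow> c1$1 \<le> c$1" "\<And>c. c \<in> C \<Longrightarrow> c2$2 \<le> c$2"
      "\<And>c. c \<in> C \<Longrightarrow> c$1 \<le> c3$1" "\<And>c. c \<in> C \<Longrightarrow> c$2 \<le> c4$2"
    and "c1$1 < c2$1" "c1$1 < c4$1" "c2$1 < c3$1" "c4$1 < c3$1"
    and "c2$2 < c1$2" "c2$2 < c3$2" "c1$2 < c4$2" "c3$2 < c4$2"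
  shows "axis_extremal_body (closure (inside C)) c1 c2 c3 c4"
proof
  have frontier_inside: "frontier (inside C) = C"
    using C(1) convex_connected[OF C(2)] by (rule jordan_curve_frontier_inside)
  show "compact (closure (inside C))"
    unfolding compact_closure using C(1) by (intro bounded_inside compact_imp_bounded jordan_curve_compact)
  show "convex (closure (inside C))" using C(2) by (rule convex_closure)
  show "c1 \<in> closure (inside C)" "c2 \<in> closure (inside C)" "c3 \<in> closure (inside C)" "c4 \<in> closure (inside C)"
    using in_C frontier_inside by (auto simp: frontier_def)
  fix q assume q: "q \<in> closure (inside C)"
  show "c1$1 \<le> q$1" by (rule closure_inside_component_ge[OF bounds(1) q])
  show "c2$2 \<le> q$2" by (rule closure_inside_component_ge[OF bounds(2) q])
  show "q$1 \<le> c3$1" by (rule closure_inside_component_le[OF bounds(3) q])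
  show "q$2 \<le> c4$2" by (rule closure_inside_component_le[OF bounds(4) q])
qed fact+

theorem lemma4:
  fixes C :: "(real^2) set" and c1 c2 c3 c4 :: "real^2"
  assumes "jordan_curve C"
    and "convex (inside C)"
    and "c1 \<in> C" "c2 \<in> C" "c3 \<in> C" "c4 \<in> C"
    and "\<forall>c\<in>C. c1$1 \<le> c$1"
    and "\<forall>c\<in>C. c2$2 \<le> c$2"
    and "\<forall>c\<in>C. c$1 \<le> c3$1"
    and "\<forall>c\<in>C. c$2 \<le> c4$2"
    and "c1$1 < min (c2$1) (min (c3$1) (c4$1))"
    and "c2$2 < min (c1$2) (min (c3$2) (c4$2))"
    and "c3$1 > max (c1$1) (max (c2$1) (c4$1))"
    and "c4$2 > max (c1$2) (max (c2$2) (c3$2))"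
  shows "\<forall>x::real^2. \<exists>u\<in>C. \<exists>v\<in>C. \<exists>w\<in>C. \<exists>t::real. t \<noteq> 0 \<and>
           u - v = t *\<^sub>R x \<and> w$1 = u$1 \<and> w$2 = v$2"
proof
  fix x :: "real^2"
  have frontier_inside: "frontier (inside C) = C"
    using assms(1) convex_connected[OF assms(2)] by (rule jordan_curve_frontier_inside)
  have "axis_extremal_body (closure (inside C)) c1 c2 c3 c4"
    using assms by (intro closure_inside_axis_extremal_body) auto
  then have "axis_right_triangle (frontier (closure (inside C))) x" if "x \<noteq> 0"
    using that by (rule axis_extremal_body.frontier_axis_right_triangle)
  then have "axis_right_triangle C x" if "x \<noteq> 0"
    using that frontier_closure_subset[of "inside C"] axis_right_triangle_mono
    unfolding frontier_inside by blast
  moreover have "axis_right_triangle C 0"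
    using assms(3) unfolding axis_right_triangle_def by (intro bexI exI[of _ 1]) auto
  ultimately have "axis_right_triangle C x" by (cases "x = 0") simp_all
  then show "\<exists>u\<in>C. \<exists>v\<in>C. \<exists>w\<in>C. \<exists>t::real. t \<noteq> 0 \<and> u - v = t *\<^sub>R x \<and> w$1 = u$1 \<and> w$2 = v$2"
    unfolding axis_right_triangle_def .
qed

end
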